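(* Let $\mathfrak{C}$ be a clustering functor on $\mathcal{M}^{inj}$ that is scale invariant: for every finite metric space $(X,d_X)$ and every $\lambda>0$, $\mathfrak{C}(X,\lambda\cdot d_X)=\mathfrak{C}(X,d_X)$. Let $K(\mathfrak{C})=\{k\geq2:\mathfrak{C}(\Delta_k(1))\text{ consists of one block}\}$. If $K(\mathfrak{C})=\emptyset$, then $\mathfrak{C}$ assigns to each finite metric space its partition into singletons. Otherwise, letting $k_{\mathfrak{C}}=\min K(\mathfrak{C})$: for each $k\geq k_{\mathfrak{C}}$, $\mathfrak{C}$ assigns to each $X\in\mathcal{M}_k$ the partition of $X$ with only one block, and for each $2\leq k<k_{\mathfrak{C}}$, $\mathfrak{C}$ assigns to each $X\in\mathcal{M}_k$ the partition of $X$ into $k$ singletons.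
   Context: $\mathcal{M}^{inj}$ is the category whose objects are finite metric spaces and whose morphisms $f:(X,d_X)\to(Y,d_Y)$ are injective distance non-increasing maps. For a set map $f:X\to Y$ and a partition $P_Y$ of $Y$, $f^*(P_Y)$ is the partition of $X$ with blocks the nonempty sets $f^{-1}(B)$, $B\in P_Y$. A clustering functor on $\mathcal{M}^{inj}$ is a rule $\mathfrak{C}$ assigning to every finite metric space $(X,d_X)$ a partition $\mathfrak{C}(X,d_X)$ of $X$ such that for every morphism $f:X\to Y$, $\mathfrak{C}(X)$ refines $f^*(\mathfrak{C}(Y))$. For $k\geq2$ and $\delta>0$, $\Delta_k(\delta)$ is the metric space with $k$ points all of whose pairwise distances equal $\delta$. $\mathcal{M}_k$ denotes the collection of finite metric spaces with exactly $k$ points. *)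

theory Defs
  imports Complex_Main "HOL-Library.Disjoint_Sets"
begin

text \<open>Finite metric spaces are represented with carrier a finite subset of nat
  and a distance function on nat (only its values on the carrier matter).\<close>

definition fin_metric :: "nat set \<Rightarrow> (nat \<Rightarrow> nat \<Rightarrow> real) \<Rightarrow> bool" where
  "fin_metric X d \<longleftrightarrow> finite X \<and>
     (\<forall>x\<in>X. \<forall>y\<in>X. d x y \<ge> 0 \<and> (d x y = 0 \<longleftrightarrow> x = y) \<and> d x y = d y x) \<and>
     (\<forall>x\<in>X. \<forall>y\<in>X. \<forall>z\<in>X. d x z \<le> d x y + d y z)"

definition inj_morph :: "nat set \<Rightarrow> (nat \<Rightarrow> nat \<Rightarrow> real) \<Rightarrow> nat set \<Rightarrow> (nat \<Rightarrow> nat \<Rightarrow> real)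
    \<Rightarrow> (nat \<Rightarrow> nat) \<Rightarrow> bool" where
  "inj_morph X dX Y dY f \<longleftrightarrow> f ` X \<subseteq> Y \<and> inj_on f X \<and>
     (\<forall>x\<in>X. \<forall>y\<in>X. dY (f x) (f y) \<le> dX x y)"

definition pullback :: "(nat \<Rightarrow> nat) \<Rightarrow> nat set \<Rightarrow> nat set set \<Rightarrow> nat set set" where
  "pullback f X PY = {f -` B \<inter> X | B. B \<in> PY \<and> f -` B \<inter> X \<noteq> {}}"

definition refines :: "'a set set \<Rightarrow> 'a set set \<Rightarrow> bool" where
  "refines P Q \<longleftrightarrow> (\<forall>B\<in>P. \<exists>B'\<in>Q. B \<subseteq> B')"

definition clustering_functor ::
    "(nat set \<Rightarrow> (nat \<Rightarrow> nat \<Rightarrow> real) \<Rightarrow> nat set set) \<Rightarrow> bool" where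
  "clustering_functor C \<longleftrightarrow>
     (\<forall>X d. fin_metric X d \<longrightarrow> partition_on X (C X d)) \<and>
     (\<forall>X dX Y dY f. fin_metric X dX \<and> fin_metric Y dY \<and> inj_morph X dX Y dY f \<longrightarrow>
        refines (C X dX) (pullback f X (C Y dY)))"

definition scale_invariant ::
    "(nat set \<Rightarrow> (nat \<Rightarrow> nat \<Rightarrow> real) \<Rightarrow> nat set set) \<Rightarrow> bool" where
  "scale_invariant C \<longleftrightarrow>
     (\<forall>X d (l::real). fin_metric X d \<and> l > 0 \<longrightarrow> C X (\<lambda>x y. l * d x y) = C X d)"

definition Delta_carrier :: "nat \<Rightarrow> nat set" where
  "Delta_carrier k = {0..<k}"

definition Delta_dist :: "real \<Rightarrow> nat \<Rightarrow> nat \<Rightarrow> real" where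
  "Delta_dist \<delta> x y = (if x = y then 0 else \<delta>)"

definition Kset :: "(nat set \<Rightarrow> (nat \<Rightarrow> nat \<Rightarrow> real) \<Rightarrow> nat set set) \<Rightarrow> nat set" where
  "Kset C = {k. k \<ge> 2 \<and> card (C (Delta_carrier k) (Delta_dist 1)) = 1}"

end

theory Submission
  imports Defs
begin

text \<open>Every finite metric space with k points receives a morphism from the uniform space
  \<open>\<Delta>\<^sub>k(M)\<close> for M at least its diameter, and a morphism to \<open>\<Delta>\<^sub>k(m)\<close> for m at most its
  least positive distance. By scale invariance the clustering of \<open>\<Delta>\<^sub>k(\<delta>)\<close> does not depend on
  \<open>\<delta>\<close>, so functoriality transports it to all of \<open>\<M>\<^sub>k\<close>: a one-block clustering of \<open>\<Delta>\<^sub>k(1)\<close>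
  forces one block, a discrete one forces singletons. Permutations of \<open>\<Delta>\<^sub>k(1)\<close> are
  automorphisms, so a block containing two points absorbs every point and \<open>\<Delta>\<^sub>k(1)\<close> is
  clustered either trivially or discretely. Finally the inclusion \<open>\<Delta>\<^sub>k \<hookrightarrow> \<Delta>\<^sub>k\<^sub>+\<^sub>1\<close> shows
  that K is closed upwards.\<close>

lemma partition_on_block_eq:
  assumes "partition_on A P" "B \<in> P" "B' \<in> P" "x \<in> B" "x \<in> B'"
  shows "B = B'"
  using assms disjointD[OF partition_onD2[OF assms(1)]] by blast

lemma partition_on_eq_single_block:
  assumes "partition_on A P" "A \<in> P"
  shows "P = {A}"
proof -
  have "B = A" if "B \<in> P" for B
  proof -
    have "B \<noteq> {}" using that partition_onD3[OF assms(1)] by blast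
    then obtain x where "x \<in> B" by blast
    moreover have "x \<in> A" using calculation that partition_onD1[OF assms(1)] by blast
    ultimately show ?thesis using partition_on_block_eq[OF assms(1) that assms(2)] by blast
  qed
  then show ?thesis using assms(2) by blast
qed

lemma partition_on_eq_singletons:
  assumes "partition_on A P" and subsingleton: "\<And>B a b. B \<in> P \<Longrightarrow> a \<in> B \<Longrightarrow> b \<in> B \<Longrightarrow> a = b"
  shows "P = (\<lambda>x. {x}) ` A"
proof (intro equalityI subsetI)
  have singleton: "B = {a}" if "B \<in> P" "a \<in> B" for B a
    using that subsingleton by blast
  fix B assume "B \<in> P"
  moreover from this have "B \<noteq> {}" using partition_onD3[OF assms(1)] by blast
  ultimately show "B \<in> (\<lambda>x. {x}) ` A"
    using singleton partition_onD1[OF assms(1)] by blast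
next
  fix S assume "S \<in> (\<lambda>x. {x}) ` A"
  then obtain x B where "S = {x}" "B \<in> P" "x \<in> B"
    using partition_onD1[OF assms(1)] by blast
  moreover from this have "B = {x}" using subsingleton by blast
  ultimately show "S \<in> P" by simp
qed

lemma clustering_functor_partition:
  "clustering_functor C \<Longrightarrow> fin_metric X d \<Longrightarrow> partition_on X (C X d)"
  unfolding clustering_functor_def by blast

lemma clustering_functor_image_block:
  assumes "clustering_functor C" "fin_metric X dX" "fin_metric Y dY"
    and "inj_morph X dX Y dY f" and "B \<in> C X dX"
  obtains B' where "B' \<in> C Y dY" "f ` B \<subseteq> B'"
proof -
  have "refines (C X dX) (pullback f X (C Y dY))"
    using assms(1-4) unfolding clustering_functor_def by blast
  then show ?thesis
    using assms(5) that unfolding refines_def pullback_def by blast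
qed

lemma fin_metric_Delta: "\<delta> > 0 \<Longrightarrow> fin_metric (Delta_carrier k) (Delta_dist \<delta>)"
  by (auto simp: fin_metric_def Delta_carrier_def Delta_dist_def)

lemma scale_invariant_Delta:
  assumes "scale_invariant C" "\<delta> > 0"
  shows "C (Delta_carrier k) (Delta_dist \<delta>) = C (Delta_carrier k) (Delta_dist 1)"
proof -
  have "Delta_dist \<delta> = (\<lambda>x y. \<delta> * Delta_dist 1 x y)"
    by (auto simp: Delta_dist_def fun_eq_iff)
  then show ?thesis
    using assms fin_metric_Delta[of 1 k] unfolding scale_invariant_def by simp
qed

lemma inj_morph_Delta_Delta:
  "inj_on f A \<Longrightarrow> f ` A \<subseteq> B \<Longrightarrow> inj_morph A (Delta_dist \<delta>) B (Delta_dist \<delta>) f"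
  by (auto simp: inj_morph_def Delta_dist_def inj_on_def)

lemma inj_morph_from_Delta:
  assumes "fin_metric X d" "bij_betw f A X" "\<And>x y. x \<in> X \<Longrightarrow> y \<in> X \<Longrightarrow> d x y \<le> M"
  shows "inj_morph A (Delta_dist M) X d f"
proof -
  have "d x x = 0" if "x \<in> X" for x
    using assms(1) that unfolding fin_metric_def by blast
  then show ?thesis
    using assms(2,3) unfolding inj_morph_def bij_betw_def Delta_dist_def by auto
qed

lemma inj_morph_to_Delta:
  assumes "fin_metric X d" "bij_betw g X A" "\<And>x y. x \<in> X \<Longrightarrow> y \<in> X \<Longrightarrow> x \<noteq> y \<Longrightarrow> m \<le> d x y"
  shows "inj_morph X d A (Delta_dist m) g"
  using assms unfolding inj_morph_def bij_betw_def fin_metric_def inj_on_def Delta_dist_def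
  by auto

lemma fin_metric_bounded:
  assumes "fin_metric X d"
  obtains M where "M > 0" "\<And>x y. x \<in> X \<Longrightarrow> y \<in> X \<Longrightarrow> d x y \<le> M"
proof
  let ?M = "Max (insert 1 ((\<lambda>(x, y). d x y) ` (X \<times> X)))"
  have fin: "finite (insert 1 ((\<lambda>(x, y). d x y) ` (X \<times> X)))"
    using assms by (simp add: fin_metric_def)
  show "?M > 0" using Max_ge[OF fin, of 1] by simp
  show "d x y \<le> ?M" if "x \<in> X" "y \<in> X" for x y
    using Max_ge[OF fin, of "d x y"] that by force
qed

lemma fin_metric_separated:
  assumes "fin_metric X d"
  obtains m where "m > 0" "\<And>x y. x \<in> X \<Longrightarrow> y \<in> X \<Longrightarrow> x \<noteq> y \<Longrightarrow> m \<le> d x y"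
proof
  let ?S = "insert 1 ((\<lambda>(x, y). d x y) ` {p \<in> X \<times> X. fst p \<noteq> snd p})"
  have fin: "finite ?S" using assms by (simp add: fin_metric_def)
  have "s > 0" if "s \<in> ?S" for s
    using that assms unfolding fin_metric_def by (force simp: less_le)
  then show "Min ?S > 0" using Min_in[OF fin] by blast
  show "Min ?S \<le> d x y" if "x \<in> X" "y \<in> X" "x \<noteq> y" for x y
    using Min_le[OF fin, of "d x y"] that by force
qed

lemma bij_betw_Delta_carrier:
  assumes "finite X"
  obtains f where "bij_betw f (Delta_carrier (card X)) X"
  using finite_same_card_bij[OF _ assms, of "Delta_carrier (card X)"]
  by (auto simp: Delta_carrier_def)

lemma clustering_single_block_if_Delta:
  assumes CF: "clustering_functor C" and SI: "scale_invariant C" and X: "fin_metric X d"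
    and single: "C (Delta_carrier (card X)) (Delta_dist 1) = {Delta_carrier (card X)}"
  shows "C X d = {X}"
proof -
  let ?D = "Delta_carrier (card X)"
  have part: "partition_on X (C X d)" using clustering_functor_partition[OF CF X] .
  obtain f where f: "bij_betw f ?D X"
    using bij_betw_Delta_carrier X unfolding fin_metric_def by blast
  obtain M where M: "M > 0" "\<And>x y. x \<in> X \<Longrightarrow> y \<in> X \<Longrightarrow> d x y \<le> M"
    using fin_metric_bounded[OF X] by blast
  have "?D \<in> C ?D (Delta_dist M)"
    using single scale_invariant_Delta[OF SI M(1)] by simp
  then obtain B where B: "B \<in> C X d" "f ` ?D \<subseteq> B"
    using clustering_functor_image_block[OF CF fin_metric_Delta[OF M(1)] X
        inj_morph_from_Delta[OF X f M(2)]] by blast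
  moreover have "f ` ?D = X" using f by (rule bij_betw_imp_surj_on)
  ultimately have "B = X" using partition_onD1[OF part] by blast
  then show ?thesis using B(1) partition_on_eq_single_block[OF part] by simp
qed

lemma clustering_singletons_if_Delta:
  assumes CF: "clustering_functor C" and SI: "scale_invariant C" and X: "fin_metric X d"
    and discrete: "C (Delta_carrier (card X)) (Delta_dist 1) = (\<lambda>x. {x}) ` Delta_carrier (card X)"
  shows "C X d = (\<lambda>x. {x}) ` X"
proof (rule partition_on_eq_singletons[OF clustering_functor_partition[OF CF X]])
  let ?D = "Delta_carrier (card X)"
  obtain f where "bij_betw f ?D X"
    using bij_betw_Delta_carrier X unfolding fin_metric_def by blast
  then have g: "bij_betw (inv_into ?D f) X ?D"
    by (rule bij_betw_inv_into)
  obtain m where m: "m > 0" "\<And>x y. x \<in> X \<Longrightarrow> y \<in> X \<Longrightarrow> x \<noteq> y \<Longrightarrow> m \<le> d x y"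
    using fin_metric_separated[OF X] by blast
  fix B a b assume B: "B \<in> C X d" and ab: "a \<in> B" "b \<in> B"
  obtain B' where "B' \<in> C ?D (Delta_dist m)" "inv_into ?D f ` B \<subseteq> B'"
    using clustering_functor_image_block[OF CF X fin_metric_Delta[OF m(1)]
        inj_morph_to_Delta[OF X g m(2)] B] by blast
  then have "inv_into ?D f a = inv_into ?D f b"
    using ab discrete scale_invariant_Delta[OF SI m(1)] by auto
  moreover have "a \<in> X" "b \<in> X"
    using B ab clustering_functor_partition[OF CF X] partition_onD1 by blast+
  ultimately show "a = b"
    using g unfolding bij_betw_def inj_on_def by blast
qed

lemma Delta_block_absorbs:
  assumes CF: "clustering_functor C"
    and B: "B \<in> C (Delta_carrier k) (Delta_dist 1)" "a \<in> B" "b \<in> B" "a \<noteq> b"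
    and c: "c \<in> Delta_carrier k"
  shows "c \<in> B"
proof (cases "c = a")
  case False
  let ?D = "Delta_carrier k" and ?P = "C (Delta_carrier k) (Delta_dist 1)"
  let ?\<sigma> = "id(b := c, c := b)"
  have part: "partition_on ?D ?P"
    using clustering_functor_partition[OF CF fin_metric_Delta] by simp
  have "b \<in> ?D" using part B partition_onD1 by blast
  then have "?\<sigma> ` ?D \<subseteq> ?D" using c by auto
  moreover have "inj_on ?\<sigma> ?D" by (auto simp: inj_on_def)
  ultimately obtain B' where B': "B' \<in> ?P" "?\<sigma> ` B \<subseteq> B'"
    using clustering_functor_image_block[OF CF fin_metric_Delta[OF zero_less_one]
        fin_metric_Delta[OF zero_less_one] inj_morph_Delta_Delta B(1)] by blast
  have "a \<in> B'" using B'(2) B(2,4) False by force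
  then have "B' = B" using partition_on_block_eq[OF part B'(1) B(1) _ B(2)] by blast
  then show ?thesis using B'(2) B(3) by auto
qed (use B in simp)

lemma Delta_single_block_or_singletons:
  assumes CF: "clustering_functor C"
  shows "C (Delta_carrier k) (Delta_dist 1) = {Delta_carrier k} \<or>
         C (Delta_carrier k) (Delta_dist 1) = (\<lambda>x. {x}) ` Delta_carrier k"
proof -
  let ?D = "Delta_carrier k" and ?P = "C (Delta_carrier k) (Delta_dist 1)"
  have part: "partition_on ?D ?P"
    using clustering_functor_partition[OF CF fin_metric_Delta] by simp
  show ?thesis
  proof (cases "\<exists>B\<in>?P. \<exists>a\<in>B. \<exists>b\<in>B. a \<noteq> b")
    case True
    then obtain B a b where B: "B \<in> ?P" "a \<in> B" "b \<in> B" "a \<noteq> b" by blast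
    then have "B = ?D"
      using Delta_block_absorbs[OF CF B] part partition_onD1 by blast
    then show ?thesis using partition_on_eq_single_block[OF part] B(1) by simp
  next
    case False
    then show ?thesis using partition_on_eq_singletons[OF part] by blast
  qed
qed

lemma card_singletons_Delta: "card ((\<lambda>x. {x}) ` Delta_carrier k) = k"
  by (subst card_image) (auto simp: Delta_carrier_def)

lemma Delta_single_block_if_in_Kset:
  assumes CF: "clustering_functor C" and k: "k \<in> Kset C"
  shows "C (Delta_carrier k) (Delta_dist 1) = {Delta_carrier k}"
proof -
  have "card (C (Delta_carrier k) (Delta_dist 1)) = 1" "2 \<le> k"
    using k by (simp_all add: Kset_def)
  then show ?thesis
    using Delta_single_block_or_singletons[OF CF, of k] card_singletons_Delta[of k] by auto
qed

lemma Delta_singletons_if_not_in_Kset: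
  assumes CF: "clustering_functor C" and "2 \<le> k" "k \<notin> Kset C"
  shows "C (Delta_carrier k) (Delta_dist 1) = (\<lambda>x. {x}) ` Delta_carrier k"
  using Delta_single_block_or_singletons[OF CF, of k] assms(2,3) by (auto simp: Kset_def)

lemma Kset_Suc:
  assumes CF: "clustering_functor C" and k: "k \<in> Kset C"
  shows "Suc k \<in> Kset C"
proof (rule ccontr)
  assume "Suc k \<notin> Kset C"
  moreover have k2: "2 \<le> k" using k by (simp add: Kset_def)
  ultimately have discrete:
      "C (Delta_carrier (Suc k)) (Delta_dist 1) = (\<lambda>x. {x}) ` Delta_carrier (Suc k)"
    using Delta_singletons_if_not_in_Kset[OF CF] by simp
  have block: "Delta_carrier k \<in> C (Delta_carrier k) (Delta_dist 1)"
    using Delta_single_block_if_in_Kset[OF CF k] by simp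
  have "inj_morph (Delta_carrier k) (Delta_dist 1) (Delta_carrier (Suc k)) (Delta_dist 1) id"
    by (rule inj_morph_Delta_Delta) (auto simp: Delta_carrier_def)
  then obtain B' where "B' \<in> C (Delta_carrier (Suc k)) (Delta_dist 1)" "id ` Delta_carrier k \<subseteq> B'"
    by (rule clustering_functor_image_block[OF CF fin_metric_Delta[OF zero_less_one]
        fin_metric_Delta[OF zero_less_one] _ block])
  then obtain j where "Delta_carrier k \<subseteq> {j}" using discrete by auto
  moreover have "0 \<in> Delta_carrier k" "1 \<in> Delta_carrier k"
    using k2 by (auto simp: Delta_carrier_def)
  ultimately show False by auto
qed

lemma Kset_upward_closed:
  assumes "clustering_functor C" "k \<in> Kset C" "k \<le> n"
  shows "n \<in> Kset C"
  using assms(3) by (induction n rule: dec_induct) (auto intro: assms(2) Kset_Suc[OF assms(1)])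

lemma clustering_singletons_if_not_in_Kset:
  assumes CF: "clustering_functor C" and SI: "scale_invariant C"
    and X: "fin_metric X d" and notK: "card X \<notin> Kset C"
  shows "C X d = (\<lambda>x. {x}) ` X"
proof (cases "2 \<le> card X")
  case True
  then show ?thesis
    using clustering_singletons_if_Delta[OF CF SI X]
      Delta_singletons_if_not_in_Kset[OF CF True notK] by simp
next
  case False
  have part: "partition_on X (C X d)" using clustering_functor_partition[OF CF X] .
  have "finite X" using X by (simp add: fin_metric_def)
  moreover have "card X \<le> Suc 0" using False by simp
  ultimately have "\<forall>a\<in>X. \<forall>b\<in>X. a = b" using card_le_Suc0_iff_eq by blast
  moreover have "B \<subseteq> X" if "B \<in> C X d" for B using that partition_onD1[OF part] by blast
  ultimately show ?thesis using partition_on_eq_singletons[OF part] by blast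
qed

theorem mainTheorem7:
  fixes C :: "nat set \<Rightarrow> (nat \<Rightarrow> nat \<Rightarrow> real) \<Rightarrow> nat set set"
  assumes "clustering_functor C" and "scale_invariant C"
  shows "(Kset C = {} \<longrightarrow>
            (\<forall>X d. fin_metric X d \<longrightarrow> C X d = (\<lambda>x. {x}) ` X)) \<and>
         (Kset C \<noteq> {} \<longrightarrow>
            (\<forall>k X d. k \<ge> (LEAST k. k \<in> Kset C) \<and> fin_metric X d \<and> card X = k
                 \<longrightarrow> C X d = {X}) \<and>
            (\<forall>k X d. 2 \<le> k \<and> k < (LEAST k. k \<in> Kset C) \<and> fin_metric X d \<and> card X = k
                 \<longrightarrow> C X d = (\<lambda>x. {x}) ` X))"
proof (intro conjI impI allI)
  fix X d assume "Kset C = {}" "fin_metric X d"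
  then show "C X d = (\<lambda>x. {x}) ` X"
    using clustering_singletons_if_not_in_Kset[OF assms] by blast
next
  fix k X d assume "Kset C \<noteq> {}" and
    k: "(LEAST k. k \<in> Kset C) \<le> k \<and> fin_metric X d \<and> card X = k"
  then have "(LEAST k. k \<in> Kset C) \<in> Kset C" by (metis LeastI ex_in_conv)
  then have "card X \<in> Kset C" using Kset_upward_closed[OF assms(1)] k by blast
  then show "C X d = {X}"
    using clustering_single_block_if_Delta[OF assms] Delta_single_block_if_in_Kset[OF assms(1)] k
    by blast
next
  fix k X d assume "2 \<le> k \<and> k < (LEAST k. k \<in> Kset C) \<and> fin_metric X d \<and> card X = k"
  then show "C X d = (\<lambda>x. {x}) ` X"
    using clustering_singletons_if_not_in_Kset[OF assms] not_less_Least by blast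
qed

end
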